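(* Let $X$ and $Y$ be finite $T_0$-spaces. (1) If $X$ and $Y$ are minimal finite spaces and $X$ is homotopy equivalent to $Y$, then $\det(X_M)=\det(Y_M)$. (2) If $X$ is homotopy equivalent to $Y$, then $|\det(X_M)|=|\det(Y_M)|$. (3) If $X$ is contractible, then $\det(X_M)=0$.
   Context: A finite $T_0$-space is identified with a finite poset via $x\le y$ iff $U_x\subseteq U_y$, where $U_x$ is the minimal open set containing $x$. For a labelling $X=\{x_1,\dots,x_n\}$, $X_M=(x_{i,j})$ is the $n\times n$ matrix with $x_{i,j}=0$ if $x_i\le x_j$ and $x_{i,j}=1$ otherwise; its determinant does not depend on the labelling. A point $x$ is a beat point if $\{y:y<x\}$ has a maximum or $\{y:y>x\}$ has a minimum. A minimal finite space is a finite $T_0$-space with no beat points. Homotopy equivalence and contractibility are in the usual topological sense. *)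

theory Defs
  imports "HOL-Analysis.Analysis" "Jordan_Normal_Form.Determinant"
begin

definition minimal_open :: "'a topology \<Rightarrow> 'a \<Rightarrow> 'a set" where
  "minimal_open X x = \<Inter>{U. openin X U \<and> x \<in> U}"

definition fin_le :: "'a topology \<Rightarrow> 'a \<Rightarrow> 'a \<Rightarrow> bool" where
  "fin_le X x y \<longleftrightarrow> minimal_open X x \<subseteq> minimal_open X y"

definition fin_lt :: "'a topology \<Rightarrow> 'a \<Rightarrow> 'a \<Rightarrow> bool" where
  "fin_lt X x y \<longleftrightarrow> fin_le X x y \<and> x \<noteq> y"

definition finite_T0_space :: "'a topology \<Rightarrow> bool" where
  "finite_T0_space X \<longleftrightarrow> finite (topspace X) \<and> t0_space X"

definition labelling :: "'a topology \<Rightarrow> (nat \<Rightarrow> 'a) \<Rightarrow> bool" where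
  "labelling X f \<longleftrightarrow> bij_betw f {..<card (topspace X)} (topspace X)"

definition assoc_matrix :: "'a topology \<Rightarrow> (nat \<Rightarrow> 'a) \<Rightarrow> int Matrix.mat" where
  "assoc_matrix X f = Matrix.mat (card (topspace X)) (card (topspace X))
     (\<lambda>(i, j). if fin_le X (f i) (f j) then 0 else 1)"

definition beat_point :: "'a topology \<Rightarrow> 'a \<Rightarrow> bool" where
  "beat_point X x \<longleftrightarrow> x \<in> topspace X \<and>
     ((\<exists>m \<in> topspace X. fin_lt X m x \<and> (\<forall>y \<in> topspace X. fin_lt X y x \<longrightarrow> fin_le X y m)) \<or>
      (\<exists>m \<in> topspace X. fin_lt X x m \<and> (\<forall>y \<in> topspace X. fin_lt X x y \<longrightarrow> fin_le X m y)))"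

definition minimal_finite_space :: "'a topology \<Rightarrow> bool" where
  "minimal_finite_space X \<longleftrightarrow> finite_T0_space X \<and> (\<forall>x \<in> topspace X. \<not> beat_point X x)"

end

theory Submission
  imports Defs
begin

(* The specialisation order of a finite space determines its topology: opens are the down-sets,
   continuous maps are the monotone ones, and pointwise comparable maps f <= g are homotopic.
   Removing a beat point x (with m the maximum below or minimum above x) is therefore a
   deformation retraction onto X - {x}; labelling x last and subtracting the column (row) of m
   from that of x leaves -1 as the only nonzero entry of the last column (row), so
   det X_M = - det (X - {x})_M.  Removing beat points one at a time yields a homotopy
   equivalent minimal finite space with the same |det X_M|.
   On a minimal finite space every map homotopic to the identity is the identity: near each time t
   the maps of a homotopy lie pointwise below h_t, and a monotone self-map comparable with the
   identity of a poset without beat points is the identity, so the set of t with h_t = id is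
   clopen in [0,1].  Hence homotopy equivalent minimal finite spaces are homeomorphic and have equal
   determinants, which gives (1) and (2); a contractible space has a one-point core, whose matrix
   is the 1 x 1 zero matrix, which gives (3). *)

lemma fin_le_iff_openin: "fin_le X x y \<longleftrightarrow> (\<forall>U. openin X U \<longrightarrow> y \<in> U \<longrightarrow> x \<in> U)"
  unfolding fin_le_def minimal_open_def by blast

lemma fin_le_refl [simp]: "fin_le X x x"
  by (simp add: fin_le_def)

lemma fin_le_trans: "fin_le X x y \<Longrightarrow> fin_le X y z \<Longrightarrow> fin_le X x z"
  by (simp add: fin_le_def)

lemma fin_le_antisym:
  "t0_space X \<Longrightarrow> x \<in> topspace X \<Longrightarrow> y \<in> topspace X \<Longrightarrow> fin_le X x y \<Longrightarrow> fin_le X y x \<Longrightarrow> x = y"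
  unfolding t0_space_def fin_le_iff_openin by blast

lemma openin_down_closed: "openin X U \<Longrightarrow> y \<in> U \<Longrightarrow> fin_le X x y \<Longrightarrow> x \<in> U"
  by (simp add: fin_le_iff_openin)

lemma mem_minimal_open: "x \<in> minimal_open X x"
  by (simp add: minimal_open_def)

lemma fin_le_of_mem_minimal_open: "x \<in> minimal_open X y \<Longrightarrow> fin_le X x y"
  unfolding fin_le_iff_openin minimal_open_def by blast

lemma continuous_map_fin_le:
  assumes "continuous_map X Y f" "y \<in> topspace X" "fin_le X x y"
  shows "fin_le Y (f x) (f y)"
  unfolding fin_le_iff_openin
proof (intro allI impI)
  fix V assume V: "openin Y V" "f y \<in> V"
  have "openin X {z \<in> topspace X. f z \<in> V}"
    using assms(1) V(1) by (simp add: continuous_map_def)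
  moreover have "y \<in> {z \<in> topspace X. f z \<in> V}"
    using assms(2) V(2) by simp
  ultimately show "f x \<in> V" using openin_down_closed[OF _ _ assms(3)] by blast
qed

lemma fin_le_subtopology: "a \<in> S \<Longrightarrow> b \<in> S \<Longrightarrow> fin_le (subtopology X S) a b \<longleftrightarrow> fin_le X a b"
  unfolding fin_le_iff_openin openin_subtopology by blast

lemma openin_minimal_open:
  assumes "finite (topspace X)" "x \<in> topspace X"
  shows "openin X (minimal_open X x)"
  unfolding minimal_open_def
proof (rule openin_Inter)
  have "{U. openin X U \<and> x \<in> U} \<subseteq> Pow (topspace X)"
    by (auto dest: openin_subset)
  then show "finite {U. openin X U \<and> x \<in> U}"
    by (meson assms(1) finite_Pow_iff finite_subset)
  show "{U. openin X U \<and> x \<in> U} \<noteq> {}"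
    using assms(2) openin_topspace by blast
qed simp

lemma openin_finite_iff_down_closed:
  assumes "finite (topspace X)"
  shows "openin X U \<longleftrightarrow> U \<subseteq> topspace X \<and> (\<forall>y \<in> U. \<forall>x. fin_le X x y \<longrightarrow> x \<in> U)"
proof
  assume "openin X U"
  then show "U \<subseteq> topspace X \<and> (\<forall>y \<in> U. \<forall>x. fin_le X x y \<longrightarrow> x \<in> U)"
    using openin_subset openin_down_closed by metis
next
  assume down: "U \<subseteq> topspace X \<and> (\<forall>y \<in> U. \<forall>x. fin_le X x y \<longrightarrow> x \<in> U)"
  have "U = (\<Union>y \<in> U. minimal_open X y)"
    using down mem_minimal_open fin_le_of_mem_minimal_open by fast
  moreover have "openin X (\<Union>y \<in> U. minimal_open X y)"
    using down openin_minimal_open[OF assms] by blast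
  ultimately show "openin X U" by simp
qed

lemma continuous_map_of_fin_le_mono:
  assumes "finite (topspace X)" "f ` topspace X \<subseteq> topspace Y"
    and mono: "\<And>x y. x \<in> topspace X \<Longrightarrow> y \<in> topspace X \<Longrightarrow> fin_le X x y \<Longrightarrow> fin_le Y (f x) (f y)"
  shows "continuous_map X Y f"
  unfolding continuous_map_def
proof (intro conjI allI impI)
  show "f \<in> topspace X \<rightarrow> topspace Y" using assms(2) by auto
  fix V assume V: "openin Y V"
  show "openin X {x \<in> topspace X. f x \<in> V}"
  proof (subst openin_finite_iff_down_closed[OF assms(1)], intro conjI ballI allI impI)
    fix y x assume y: "y \<in> {x \<in> topspace X. f x \<in> V}" and xy: "fin_le X x y"
    have x: "x \<in> topspace X"
      using openin_down_closed[OF openin_topspace _ xy] y by simp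
    have "f x \<in> V"
      using openin_down_closed[OF V _ mono[OF x _ xy]] y by simp
    then show "x \<in> {x \<in> topspace X. f x \<in> V}" using x by simp
  qed auto
qed

lemma homotopic_with_fin_le:
  assumes f: "continuous_map X Y f" and g: "continuous_map X Y g"
    and le: "\<And>x. x \<in> topspace X \<Longrightarrow> fin_le Y (f x) (g x)"
  shows "homotopic_with (\<lambda>_. True) X Y f g"
proof -
  let ?I = "top_of_set {0..1::real}"
  define H where "H = (\<lambda>(t::real, x). if t < 1 then f x else g x)"
  have "openin (prod_topology ?I X) {p \<in> topspace (prod_topology ?I X). H p \<in> V}"
    if V: "openin Y V" for V
  proof -
    have "{p \<in> topspace (prod_topology ?I X). H p \<in> V}
        = ({0..<1} \<times> {x \<in> topspace X. f x \<in> V}) \<union> ({0..1} \<times> {x \<in> topspace X. g x \<in> V})"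
    proof -
      \<comment> \<open>\<open>V\<close> is down-closed, so \<open>g x \<in> V\<close> implies \<open>f x \<in> V\<close>\<close>
      have "H (t, x) \<in> V \<longleftrightarrow> t < 1 \<and> f x \<in> V \<or> g x \<in> V"
        if "t \<le> 1" "x \<in> topspace X" for t x
        using openin_down_closed[OF V _ le[OF that(2)]] that(1) by (auto simp: H_def)
      then show ?thesis by fastforce
    qed
    moreover have "openin ?I {0..<1}"
    proof -
      have "{0..1::real} \<inter> {..<1} = {0..<1}" by auto
      then show ?thesis using openin_open_Int[of "{..<1}" "{0..1::real}"] by simp
    qed
    moreover have "openin X {x \<in> topspace X. f x \<in> V}" "openin X {x \<in> topspace X. g x \<in> V}"
      using f g V by (simp_all add: continuous_map_def)
    ultimately show ?thesis
      by (simp add: openin_Un openin_prod_Times_iff)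
  qed
  moreover have "H \<in> topspace (prod_topology ?I X) \<rightarrow> topspace Y"
    using f g by (auto simp: H_def continuous_map_def)
  ultimately have "continuous_map (prod_topology ?I X) Y H"
    by (simp add: continuous_map_def)
  then show ?thesis
    unfolding homotopic_with_def by (intro exI[of _ H]) (simp add: H_def)
qed

lemma homotopy_locally_fin_le:
  assumes "finite (topspace X)" "finite (topspace Y)"
    and h: "continuous_map (prod_topology T X) Y h" and t: "t \<in> topspace T"
  obtains N where "openin T N" "t \<in> N"
    "\<And>s x. s \<in> N \<Longrightarrow> x \<in> topspace X \<Longrightarrow> fin_le Y (h (s, x)) (h (t, x))"
proof
  let ?N = "(\<Inter>x \<in> topspace X. {s \<in> topspace T. h (s, x) \<in> minimal_open Y (h (t, x))}) \<inter> topspace T"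
  have "openin T {s \<in> topspace T. h (s, x) \<in> minimal_open Y (h (t, x))}"
    if x: "x \<in> topspace X" for x
  proof -
    have "continuous_map T (prod_topology T X) (\<lambda>s. (s, x))"
      using x by (intro continuous_intros) auto
    then have "continuous_map T Y (\<lambda>s. h (s, x))"
      using continuous_map_compose[OF _ h] by (simp add: o_def)
    moreover have "openin Y (minimal_open Y (h (t, x)))"
      using openin_minimal_open[OF assms(2)] continuous_map_image_subset_topspace[OF h] t x by auto
    ultimately show ?thesis by (simp add: continuous_map_def)
  qed
  then show "openin T ?N" by (rule openin_INT[OF assms(1)])
  show "t \<in> ?N" using t by (simp add: mem_minimal_open)
  show "fin_le Y (h (s, x)) (h (t, x))" if "s \<in> ?N" "x \<in> topspace X" for s x
  proof (rule fin_le_of_mem_minimal_open)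
    show "h (s, x) \<in> minimal_open Y (h (t, x))" using that by blast
  qed
qed

lemma deflation_eq_id_if_no_beat_points:
  fixes le :: "'a \<Rightarrow> 'a \<Rightarrow> bool"
  assumes "finite A"
    and reflexive: "\<And>x. x \<in> A \<Longrightarrow> le x x"
    and antisymmetric: "\<And>x y. x \<in> A \<Longrightarrow> y \<in> A \<Longrightarrow> le x y \<Longrightarrow> le y x \<Longrightarrow> x = y"
    and transitive: "\<And>x y z. x \<in> A \<Longrightarrow> y \<in> A \<Longrightarrow> z \<in> A \<Longrightarrow> le x y \<Longrightarrow> le y z \<Longrightarrow> le x z"
    and no_beat: "\<And>x. x \<in> A \<Longrightarrow>
      \<not> (\<exists>m \<in> A. le m x \<and> m \<noteq> x \<and> (\<forall>y \<in> A. le y x \<and> y \<noteq> x \<longrightarrow> le y m))"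
    and maps: "\<And>x. x \<in> A \<Longrightarrow> \<phi> x \<in> A"
    and mono: "\<And>x y. x \<in> A \<Longrightarrow> y \<in> A \<Longrightarrow> le x y \<Longrightarrow> le (\<phi> x) (\<phi> y)"
    and below: "\<And>x. x \<in> A \<Longrightarrow> le (\<phi> x) x"
    and "x \<in> A"
  shows "\<phi> x = x"
  using \<open>x \<in> A\<close>
proof (induction "card {y \<in> A. le y x}" arbitrary: x rule: less_induct)
  case less
  have fixed_below: "\<phi> y = y" if y: "y \<in> A" "le y x" "y \<noteq> x" for y
  proof (rule less.hyps[OF _ y(1)])
    have "{z \<in> A. le z y} \<subseteq> {z \<in> A. le z x}"
      using transitive y less.prems by blast
    moreover have "x \<notin> {z \<in> A. le z y}"
      using antisymmetric y less.prems by blast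
    moreover have "x \<in> {z \<in> A. le z x}"
      using reflexive less.prems by blast
    ultimately show "card {z \<in> A. le z y} < card {z \<in> A. le z x}"
      using \<open>finite A\<close> by (metis (no_types, lifting) finite_subset mem_Collect_eq psubsetI
          psubset_card_mono subsetI)
  qed
  show "\<phi> x = x"
  proof (rule ccontr)
    assume "\<phi> x \<noteq> x"
    moreover have "le y (\<phi> x)" if "y \<in> A" "le y x" "y \<noteq> x" for y
      using mono[OF that(1) less.prems that(2)] fixed_below[OF that] by simp
    ultimately show False
      using no_beat[OF less.prems] maps[OF less.prems] below[OF less.prems] by blast
  qed
qed

lemma minimal_finite_space_fin_le_id_eq:
  assumes X: "minimal_finite_space X" and \<phi>: "continuous_map X X \<phi>"
    and below: "\<And>x. x \<in> topspace X \<Longrightarrow> fin_le X (\<phi> x) x"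
    and x: "x \<in> topspace X"
  shows "\<phi> x = x"
proof (rule deflation_eq_id_if_no_beat_points[where le = "fin_le X"])
  have T0: "t0_space X" and "finite (topspace X)"
    using X by (simp_all add: minimal_finite_space_def finite_T0_space_def)
  then show "finite (topspace X)" by simp
  show "\<And>x y. x \<in> topspace X \<Longrightarrow> y \<in> topspace X \<Longrightarrow> fin_le X x y \<Longrightarrow> fin_le X y x \<Longrightarrow> x = y"
    by (rule fin_le_antisym[OF T0])
  show "\<not> (\<exists>m \<in> topspace X. fin_le X m x \<and> m \<noteq> x \<and>
      (\<forall>y \<in> topspace X. fin_le X y x \<and> y \<noteq> x \<longrightarrow> fin_le X y m))" if "x \<in> topspace X" for x
  proof -
    have "\<not> beat_point X x" using X that by (simp add: minimal_finite_space_def)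
    then show ?thesis by (simp add: beat_point_def fin_lt_def that)
  qed
  show "\<And>x. x \<in> topspace X \<Longrightarrow> \<phi> x \<in> topspace X"
    using \<phi> by (simp add: continuous_map_def Pi_iff)
  show "\<And>x y. x \<in> topspace X \<Longrightarrow> y \<in> topspace X \<Longrightarrow> fin_le X x y \<Longrightarrow> fin_le X (\<phi> x) (\<phi> y)"
    by (rule continuous_map_fin_le[OF \<phi>])
  show "\<And>x y z. fin_le X x y \<Longrightarrow> fin_le X y z \<Longrightarrow> fin_le X x z"
    by (rule fin_le_trans)
qed (simp_all add: below x)

lemma minimal_finite_space_id_fin_le_eq:
  assumes X: "minimal_finite_space X" and \<phi>: "continuous_map X X \<phi>"
    and above: "\<And>x. x \<in> topspace X \<Longrightarrow> fin_le X x (\<phi> x)"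
    and x: "x \<in> topspace X"
  shows "\<phi> x = x"
proof (rule deflation_eq_id_if_no_beat_points[where le = "\<lambda>a b. fin_le X b a"])
  have T0: "t0_space X" and "finite (topspace X)"
    using X by (simp_all add: minimal_finite_space_def finite_T0_space_def)
  then show "finite (topspace X)" by simp
  show "\<And>x y. x \<in> topspace X \<Longrightarrow> y \<in> topspace X \<Longrightarrow> fin_le X y x \<Longrightarrow> fin_le X x y \<Longrightarrow> x = y"
    by (rule fin_le_antisym[OF T0])
  show "\<not> (\<exists>m \<in> topspace X. fin_le X x m \<and> m \<noteq> x \<and>
      (\<forall>y \<in> topspace X. fin_le X x y \<and> y \<noteq> x \<longrightarrow> fin_le X m y))" if "x \<in> topspace X" for x
  proof -
    have "\<not> beat_point X x" using X that by (simp add: minimal_finite_space_def)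
    then show ?thesis unfolding beat_point_def fin_lt_def using that by blast
  qed
  show "\<And>x. x \<in> topspace X \<Longrightarrow> \<phi> x \<in> topspace X"
    using \<phi> by (simp add: continuous_map_def Pi_iff)
  show "\<And>x y. x \<in> topspace X \<Longrightarrow> y \<in> topspace X \<Longrightarrow> fin_le X y x \<Longrightarrow> fin_le X (\<phi> y) (\<phi> x)"
    by (rule continuous_map_fin_le[OF \<phi>])
  show "\<And>x y z. fin_le X y x \<Longrightarrow> fin_le X z y \<Longrightarrow> fin_le X z x"
    by (rule fin_le_trans)
qed (simp_all add: above x)

lemma minimal_finite_space_homotopic_id:
  assumes X: "minimal_finite_space X" and hom: "homotopic_with (\<lambda>_. True) X X \<phi> id"
    and x: "x \<in> topspace X"
  shows "\<phi> x = x"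
proof -
  have fin: "finite (topspace X)"
    using X by (simp add: minimal_finite_space_def finite_T0_space_def)
  obtain h where h: "continuous_map (prod_topology (top_of_set {0..1::real}) X) X h"
    and h0: "\<And>x. h (0, x) = \<phi> x" and h1: "\<And>x. h (1, x) = x"
    using hom unfolding homotopic_with_def by auto
  have slice: "continuous_map X X (\<lambda>x. h (t, x))" if "t \<in> {0..1}" for t
    using continuous_map_o_Pair[OF h] that by (simp add: o_def)
  define is_id where "is_id t \<longleftrightarrow> (\<forall>x \<in> topspace X. h (t, x) = x)" for t
  have "is_id 0"
  proof (rule connected_induction_simple[where P = is_id and a = 1])
    show "is_id 1" by (simp add: is_id_def h1)
    fix t :: real assume t: "t \<in> {0..1}"
    obtain N where N: "openin (top_of_set {0..1}) N" "t \<in> N"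
      and below: "\<And>s x. s \<in> N \<Longrightarrow> x \<in> topspace X \<Longrightarrow> fin_le X (h (s, x)) (h (t, x))"
      using homotopy_locally_fin_le[OF fin fin h] t by auto
    have "is_id s'" if "s \<in> N" "s' \<in> N" "is_id s" for s s'
    proof -
      have "is_id t"
        using minimal_finite_space_id_fin_le_eq[OF X slice[OF t]] below[OF that(1)] that(3)
        by (simp add: is_id_def)
      moreover have "s' \<in> {0..1}" using N(1) that(2) openin_imp_subset by fastforce
      ultimately show ?thesis
        using minimal_finite_space_fin_le_id_eq[OF X slice] below[OF that(2)] by (simp add: is_id_def)
    qed
    then show "\<exists>N. openin (top_of_set {0..1}) N \<and> t \<in> N \<and> (\<forall>s \<in> N. \<forall>s' \<in> N. is_id s \<longrightarrow> is_id s')"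
      using N by blast
  qed auto
  then show ?thesis using x h0 by (simp add: is_id_def)
qed

(* X_M for an arbitrary relation: reversing the relation transposes the matrix. *)
definition order_matrix :: "('a \<Rightarrow> 'a \<Rightarrow> bool) \<Rightarrow> nat \<Rightarrow> (nat \<Rightarrow> 'a) \<Rightarrow> int mat" where
  "order_matrix r n f = mat n n (\<lambda>(i, j). if r (f i) (f j) then 0 else 1)"

lemma assoc_matrix_eq_order_matrix:
  "assoc_matrix X f = order_matrix (fin_le X) (card (topspace X)) f"
  by (simp add: assoc_matrix_def order_matrix_def)

lemma dim_order_matrix [simp]:
  "dim_row (order_matrix r n f) = n" "dim_col (order_matrix r n f) = n"
  by (simp_all add: order_matrix_def)

lemma order_matrix_carrier [simp]: "order_matrix r n f \<in> carrier_mat n n"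
  by (simp add: carrier_matI)

lemma order_matrix_index [simp]:
  "i < n \<Longrightarrow> j < n \<Longrightarrow> order_matrix r n f $$ (i, j) = (if r (f i) (f j) then 0 else 1)"
  by (simp add: order_matrix_def)

lemma order_matrix_cong:
  "(\<And>i j. i < n \<Longrightarrow> j < n \<Longrightarrow> r (f i) (f j) \<longleftrightarrow> r' (g i) (g j)) \<Longrightarrow>
    order_matrix r n f = order_matrix r' n g"
  by (rule eq_matI) auto

lemma transpose_order_matrix:
  "transpose_mat (order_matrix r n f) = order_matrix (\<lambda>a b. r b a) n f"
  by (rule eq_matI) auto

lemma det_permute_rows_and_cols:
  fixes A :: "'a :: comm_ring_1 mat"
  assumes A: "A \<in> carrier_mat n n" and p: "p permutes {0..<n}"
  shows "det (mat n n (\<lambda>(i, j). A $$ (p i, p j))) = det A"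
proof -
  let ?B = "mat n n (\<lambda>(i, j). A $$ (p i, j))"
  let ?D = "mat n n (\<lambda>(i, j). transpose_mat ?B $$ (p i, j))"
  have pn: "\<And>i. i < n \<Longrightarrow> p i < n" using p by (simp add: permutes_in_image)
  have "mat n n (\<lambda>(i, j). A $$ (p i, p j)) = transpose_mat ?D"
    by (rule eq_matI) (auto simp: pn)
  then have "det (mat n n (\<lambda>(i, j). A $$ (p i, p j))) = det ?D"
    by (simp add: det_transpose[of _ n])
  also have "\<dots> = signof p * det (transpose_mat ?B)" by (rule det_permute_rows[OF _ p]) simp
  also have "det (transpose_mat ?B) = det ?B" by (rule det_transpose[of _ n]) simp
  also have "det ?B = signof p * det A" by (rule det_permute_rows[OF A p])
  finally show ?thesis by (simp add: sign_def)
qed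

lemma det_order_matrix_relabel:
  assumes f: "bij_betw f {..<n} A" and g: "bij_betw g {..<n} A"
  shows "det (order_matrix r n g) = det (order_matrix r n f)"
proof -
  define p where "p i = (if i < n then inv_into {..<n} f (g i) else i)" for i
  have "bij_betw (inv_into {..<n} f \<circ> g) {..<n} {..<n}"
    by (rule bij_betw_trans[OF g bij_betw_inv_into[OF f]])
  then have "bij_betw p {..<n} {..<n}"
    by (rule bij_betw_cong[THEN iffD1, rotated]) (simp add: p_def)
  then have p: "p permutes {0..<n}"
    by (intro bij_imp_permutes) (auto simp: p_def atLeast0LessThan)
  have "g i = f (p i)" if "i < n" for i
    using that bij_betwE[OF g] bij_betw_imp_surj_on[OF f] by (simp add: p_def f_inv_into_f)
  moreover have "\<And>i. i < n \<Longrightarrow> p i < n" using p by (simp add: permutes_in_image)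
  ultimately have "order_matrix r n g = mat n n (\<lambda>(i, j). order_matrix r n f $$ (p i, p j))"
    by (intro eq_matI) auto
  then show ?thesis using det_permute_rows_and_cols[OF order_matrix_carrier p] by simp
qed

lemma det_order_matrix_drop_lower_beat:
  assumes k: "k < n" and refl: "r (f n) (f n)" and not_above: "\<not> r (f n) (f k)"
    and same_below: "\<And>i. i < n \<Longrightarrow> r (f i) (f n) \<longleftrightarrow> r (f i) (f k)"
  shows "det (order_matrix r (Suc n) f) = - det (order_matrix r n f)"
proof -
  let ?A = "order_matrix r (Suc n) f"
  let ?B = "addcol (-1) n k ?A"
  have B: "?B \<in> carrier_mat (Suc n) (Suc n)" by (intro carrier_matI) simp_all
  have "det ?B = det ?A" using k by (intro det_addcol[OF _ _ order_matrix_carrier]) auto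
  have B_entry: "?B $$ (i, j) = (if j = n then ?A $$ (i, n) - ?A $$ (i, k) else ?A $$ (i, j))"
    if "i < Suc n" "j < Suc n" for i j using that by simp
  have last_col: "?B $$ (i, n) = (if i = n then -1 else 0)" if "i < Suc n" for i
    using that k B_entry[of i n] same_below[of i] refl not_above by (auto simp: less_Suc_eq)
  have "det ?B = (\<Sum>i<Suc n. ?B $$ (i, n) * cofactor ?B i n)"
    by (rule laplace_expansion_column[OF B]) simp
  also have "\<dots> = - cofactor ?B n n"
    using last_col by (simp add: sum.If_cases lessThan_Suc)
  also have "cofactor ?B n n = det (mat_delete ?B n n)"
    by (simp add: cofactor_def)
  also have "mat_delete ?B n n = order_matrix r n f"
    by (rule eq_matI) (auto simp: mat_delete_def)
  finally show ?thesis using \<open>det ?B = det ?A\<close> by simp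
qed

lemma det_order_matrix_drop_upper_beat:
  assumes k: "k < n" and refl: "r (f n) (f n)" and not_below: "\<not> r (f k) (f n)"
    and same_above: "\<And>j. j < n \<Longrightarrow> r (f n) (f j) \<longleftrightarrow> r (f k) (f j)"
  shows "det (order_matrix r (Suc n) f) = - det (order_matrix r n f)"
proof -
  have "det (order_matrix (\<lambda>a b. r b a) (Suc n) f) = - det (order_matrix (\<lambda>a b. r b a) n f)"
    using assms by (intro det_order_matrix_drop_lower_beat[OF k]) auto
  then show ?thesis
    by (metis det_transpose order_matrix_carrier transpose_order_matrix)
qed

lemma homotopy_equivalent_minimal_finite_spaces_homeomorphic:
  assumes X: "minimal_finite_space X" and Y: "minimal_finite_space Y"
    and "X homotopy_equivalent_space Y"
  shows "X homeomorphic_space Y"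
proof -
  obtain \<phi> \<psi> where "continuous_map X Y \<phi>" "continuous_map Y X \<psi>"
    and "homotopic_with (\<lambda>x. True) X X (\<psi> \<circ> \<phi>) id" "homotopic_with (\<lambda>x. True) Y Y (\<phi> \<circ> \<psi>) id"
    using assms(3) unfolding homotopy_equivalent_space_def by blast
  then have "homeomorphic_maps X Y \<phi> \<psi>"
    unfolding homeomorphic_maps_def
    using minimal_finite_space_homotopic_id[OF X] minimal_finite_space_homotopic_id[OF Y] by fastforce
  then show ?thesis by (rule homeomorphic_maps_imp_homeomorphic_space)
qed

lemma homeomorphic_maps_fin_le_iff:
  assumes hm: "homeomorphic_maps X Y \<phi> \<psi>" and a: "a \<in> topspace X" and b: "b \<in> topspace X"
  shows "fin_le Y (\<phi> a) (\<phi> b) \<longleftrightarrow> fin_le X a b"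
proof
  have \<phi>: "continuous_map X Y \<phi>" and \<psi>: "continuous_map Y X \<psi>"
    and inv: "\<And>x. x \<in> topspace X \<Longrightarrow> \<psi> (\<phi> x) = x"
    using hm by (simp_all add: homeomorphic_maps_def)
  show "fin_le X a b" if "fin_le Y (\<phi> a) (\<phi> b)"
    using continuous_map_fin_le[OF \<psi> _ that] continuous_map_image_subset_topspace[OF \<phi>] a b inv by auto
  show "fin_le Y (\<phi> a) (\<phi> b)" if "fin_le X a b"
    by (rule continuous_map_fin_le[OF \<phi> b that])
qed

lemma det_assoc_matrix_homeomorphic:
  assumes "X homeomorphic_space Y" and f: "labelling X f" and g: "labelling Y g"
  shows "det (assoc_matrix X f) = det (assoc_matrix Y g)"
proof -
  obtain \<phi> \<psi> where hm: "homeomorphic_maps X Y \<phi> \<psi>"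
    using assms(1) unfolding homeomorphic_space_def by blast
  then have "bij_betw \<phi> (topspace X) (topspace Y)"
    unfolding homeomorphic_maps_def
    by (metis bij_betw_byWitness continuous_map_image_subset_topspace)
  then have card: "card (topspace X) = card (topspace Y)"
    by (rule bij_betw_same_card)
  have f': "bij_betw f {..<card (topspace Y)} (topspace X)"
    using f card by (simp add: labelling_def)
  have "assoc_matrix X f = order_matrix (fin_le Y) (card (topspace Y)) (\<phi> \<circ> f)"
    unfolding assoc_matrix_eq_order_matrix card
    using homeomorphic_maps_fin_le_iff[OF hm] bij_betwE[OF f']
    by (intro order_matrix_cong) auto
  also have "det \<dots> = det (order_matrix (fin_le Y) (card (topspace Y)) g)"
    using g bij_betw_trans[OF f' \<open>bij_betw \<phi> _ _\<close>]
    by (intro det_order_matrix_relabel) (simp_all add: labelling_def)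
  finally show ?thesis by (simp add: assoc_matrix_eq_order_matrix)
qed

lemma beat_point_cases:
  assumes "beat_point X x"
  obtains (down) m where "m \<in> topspace X" "m \<noteq> x" "fin_le X m x"
    "\<And>y. y \<in> topspace X \<Longrightarrow> fin_le X y x \<Longrightarrow> y \<noteq> x \<Longrightarrow> fin_le X y m"
  | (up) m where "m \<in> topspace X" "m \<noteq> x" "fin_le X x m"
    "\<And>y. y \<in> topspace X \<Longrightarrow> fin_le X x y \<Longrightarrow> y \<noteq> x \<Longrightarrow> fin_le X m y"
  using assms unfolding beat_point_def fin_lt_def by blast

lemma beat_point_homotopy_equivalent:
  assumes X: "finite_T0_space X" and x: "beat_point X x"
  shows "X homotopy_equivalent_space subtopology X (topspace X - {x})"
proof -
  let ?X' = "subtopology X (topspace X - {x})"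
  have fin: "finite (topspace X)" using X by (simp add: finite_T0_space_def)
  obtain m where m: "m \<in> topspace X" "m \<noteq> x" and m_cases:
    "(fin_le X m x \<and> (\<forall>y \<in> topspace X. fin_le X y x \<and> y \<noteq> x \<longrightarrow> fin_le X y m))
     \<or> (fin_le X x m \<and> (\<forall>y \<in> topspace X. fin_le X x y \<and> y \<noteq> x \<longrightarrow> fin_le X m y))"
    using x by (cases rule: beat_point_cases) blast+
  define r where "r z = (if z = x then m else z)" for z
  have r_maps: "r ` topspace X \<subseteq> topspace X - {x}"
    using m by (auto simp: r_def)
  have "fin_le X (r y) (r z)" if "y \<in> topspace X" "z \<in> topspace X" "fin_le X y z" for y z
    using m_cases that fin_le_trans[of X m x z] fin_le_trans[of X y x m] by (auto simp: r_def)
  then have "continuous_map X X r"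
    using r_maps by (intro continuous_map_of_fin_le_mono[OF fin]) auto
  then have r: "continuous_map X ?X' r"
    using r_maps by (simp add: continuous_map_in_subtopology image_subset_iff_funcset)
  have "homotopic_with (\<lambda>_. True) X X r id"
    using m_cases
  proof
    assume "fin_le X m x \<and> (\<forall>y \<in> topspace X. fin_le X y x \<and> y \<noteq> x \<longrightarrow> fin_le X y m)"
    then show ?thesis
      using \<open>continuous_map X X r\<close> by (intro homotopic_with_fin_le) (auto simp: r_def)
  next
    assume "fin_le X x m \<and> (\<forall>y \<in> topspace X. fin_le X x y \<and> y \<noteq> x \<longrightarrow> fin_le X m y)"
    then have "homotopic_with (\<lambda>_. True) X X id r"
      using \<open>continuous_map X X r\<close> by (intro homotopic_with_fin_le) (auto simp: r_def)
    then show ?thesis by (rule homotopic_with_symD)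
  qed
  moreover have "retraction_maps X ?X' r id"
    using r by (simp add: retraction_maps_def continuous_map_from_subtopology r_def)
  ultimately show ?thesis
    by (intro deformation_retraction_imp_homotopy_equivalent_space) simp_all
qed

lemma abs_det_remove_beat_point:
  assumes X: "finite_T0_space X" and x: "beat_point X x"
    and f: "labelling X f" and g: "labelling (subtopology X (topspace X - {x})) g"
  shows "\<bar>det (assoc_matrix X f)\<bar> = \<bar>det (assoc_matrix (subtopology X (topspace X - {x})) g)\<bar>"
proof -
  define n where "n = card (topspace X - {x})"
  define f0 where "f0 = g(n := x)"
  have x_in: "x \<in> topspace X" using x by (simp add: beat_point_def)
  have fin: "finite (topspace X)" and T0: "t0_space X"
    using X by (simp_all add: finite_T0_space_def)
  have card: "card (topspace X) = Suc n"
    using card_Suc_Diff1[OF fin x_in] by (simp add: n_def)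
  have X'_space: "topspace (subtopology X (topspace X - {x})) = topspace X - {x}" by auto
  then have g': "bij_betw g {..<n} (topspace X - {x})"
    using g by (simp add: labelling_def n_def)
  have f0n: "f0 n = x" by (simp add: f0_def)
  have "bij_betw f0 {..<n} (topspace X - {x})"
    using g' by (rule bij_betw_cong[THEN iffD1, rotated]) (simp add: f0_def)
  then have "bij_betw f0 ({..<n} \<union> {n}) ((topspace X - {x}) \<union> {f0 n})"
    by (rule notIn_Un_bij_betw3[THEN iffD1, rotated 2]) (simp_all add: f0n)
  moreover have "{..<n} \<union> {n} = {..<Suc n}" "(topspace X - {x}) \<union> {f0 n} = topspace X"
    using x_in by (auto simp: f0n)
  ultimately have f0: "bij_betw f0 {..<Suc n} (topspace X)" by simp
  have f0_below: "f0 i \<in> topspace X - {x}" if "i < n" for i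
    using bij_betwE[OF g'] that by (simp add: f0_def)
  have f0_onto: "\<exists>k < n. f0 k = m" if "m \<in> topspace X" "m \<noteq> x" for m
  proof -
    have "m \<in> g ` {..<n}" using bij_betw_imp_surj_on[OF g'] that by blast
    then show ?thesis by (auto simp: f0_def)
  qed
  have "det (assoc_matrix X f) = det (order_matrix (fin_le X) (Suc n) f)"
    by (simp add: assoc_matrix_eq_order_matrix card)
  also have "\<dots> = det (order_matrix (fin_le X) (Suc n) f0)"
    using f by (intro det_order_matrix_relabel[OF f0]) (simp add: labelling_def card)
  also from x have "\<dots> = - det (order_matrix (fin_le X) n f0)"
  proof (cases rule: beat_point_cases)
    case (down m)
    then obtain k where k: "k < n" "f0 k = m" using f0_onto by blast
    show ?thesis
    proof (rule det_order_matrix_drop_lower_beat[OF k(1)])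
      show "\<not> fin_le X (f0 n) (f0 k)"
        using fin_le_antisym[OF T0 x_in down(1)] down(2,3) unfolding f0n k(2) by blast
      show "fin_le X (f0 i) (f0 n) \<longleftrightarrow> fin_le X (f0 i) (f0 k)" if "i < n" for i
        unfolding f0n k(2)
      proof
        show "fin_le X (f0 i) m" if "fin_le X (f0 i) x"
          using down(4) f0_below[OF \<open>i < n\<close>] that by simp
        show "fin_le X (f0 i) x" if "fin_le X (f0 i) m"
          using that down(3) by (rule fin_le_trans)
      qed
    qed simp
  next
    case (up m)
    then obtain k where k: "k < n" "f0 k = m" using f0_onto by blast
    show ?thesis
    proof (rule det_order_matrix_drop_upper_beat[OF k(1)])
      show "\<not> fin_le X (f0 k) (f0 n)"
        using fin_le_antisym[OF T0 up(1) x_in] up(2,3) unfolding f0n k(2) by blast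
      show "fin_le X (f0 n) (f0 j) \<longleftrightarrow> fin_le X (f0 k) (f0 j)" if "j < n" for j
        unfolding f0n k(2)
      proof
        show "fin_le X m (f0 j)" if "fin_le X x (f0 j)"
          using up(4) f0_below[OF \<open>j < n\<close>] that by simp
        show "fin_le X x (f0 j)" if "fin_le X m (f0 j)"
          using up(3) that by (rule fin_le_trans)
      qed
    qed simp
  qed
  also have "order_matrix (fin_le X) n f0 = assoc_matrix (subtopology X (topspace X - {x})) g"
    unfolding assoc_matrix_eq_order_matrix X'_space n_def[symmetric]
  proof (rule order_matrix_cong)
    fix i j assume "i < n" "j < n"
    moreover have "g i \<in> topspace X - {x}" "g j \<in> topspace X - {x}"
      using bij_betwE[OF g'] \<open>i < n\<close> \<open>j < n\<close> by auto
    ultimately show "fin_le X (f0 i) (f0 j) \<longleftrightarrow> fin_le (subtopology X (topspace X - {x})) (g i) (g j)"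
      by (simp add: f0_def fin_le_subtopology)
  qed
  finally show ?thesis by simp
qed

lemma labelling_exists: "finite (topspace X) \<Longrightarrow> \<exists>f. labelling X f"
  using ex_bij_betw_nat_finite unfolding labelling_def by (metis atLeast0LessThan)

lemma finite_T0_space_core:
  fixes X :: "'a topology"
  assumes "finite_T0_space X"
  shows "\<exists>(Z :: 'a topology) h. minimal_finite_space Z \<and> X homotopy_equivalent_space Z \<and> labelling Z h \<and>
    (\<forall>f. labelling X f \<longrightarrow> \<bar>det (assoc_matrix X f)\<bar> = \<bar>det (assoc_matrix Z h)\<bar>)"
  using assms
proof (induction "card (topspace X)" arbitrary: X rule: less_induct)
  case less
  have fin: "finite (topspace X)" using less.prems by (simp add: finite_T0_space_def)
  show ?case
  proof (cases "minimal_finite_space X")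
    case True
    obtain h where h: "labelling X h" using labelling_exists[OF fin] by blast
    show ?thesis
    proof (intro exI[of _ X] exI[of _ h] conjI allI impI)
      show "\<bar>det (assoc_matrix X f)\<bar> = \<bar>det (assoc_matrix X h)\<bar>" if "labelling X f" for f
        using det_assoc_matrix_homeomorphic[OF homeomorphic_space_refl that h] by simp
    qed (simp_all add: True h homotopy_equivalent_space_refl)
  next
    case False
    then obtain x where x: "beat_point X x"
      using less.prems by (auto simp: minimal_finite_space_def)
    let ?X' = "subtopology X (topspace X - {x})"
    have "finite_T0_space ?X'"
      using less.prems fin by (simp add: finite_T0_space_def t0_space_subtopology)
    moreover have "card (topspace ?X') < card (topspace X)"
    proof -
      have "topspace ?X' = topspace X - {x}" "x \<in> topspace X"
        using x by (auto simp: beat_point_def)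
      then show ?thesis using card_Diff1_less[OF fin] by simp
    qed
    ultimately obtain Z :: "'a topology" and h
      where Z: "minimal_finite_space Z" "?X' homotopy_equivalent_space Z" "labelling Z h"
      and det_Z: "\<forall>g. labelling ?X' g \<longrightarrow> \<bar>det (assoc_matrix ?X' g)\<bar> = \<bar>det (assoc_matrix Z h)\<bar>"
      using less.hyps by blast
    obtain g where g: "labelling ?X' g"
      using labelling_exists[of ?X'] fin by auto
    show ?thesis
    proof (intro exI[of _ Z] exI[of _ h] conjI allI impI)
      show "X homotopy_equivalent_space Z"
        using beat_point_homotopy_equivalent[OF less.prems x] Z(2) by (rule homotopy_eqv_trans)
      show "\<bar>det (assoc_matrix X f)\<bar> = \<bar>det (assoc_matrix Z h)\<bar>" if "labelling X f" for f
        using abs_det_remove_beat_point[OF less.prems x that g] det_Z g by simp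
    qed (simp_all add: Z)
  qed
qed

lemma det_assoc_matrix_singleton:
  assumes "topspace X = {a}"
  shows "det (assoc_matrix X f) = 0"
proof -
  have "det (order_matrix (fin_le X) 1 f) = order_matrix (fin_le X) 1 f $$ (0, 0)"
    by (rule det_single) simp
  then show ?thesis by (simp add: assoc_matrix_eq_order_matrix assms)
qed

lemma contractible_minimal_finite_space_subsingleton:
  assumes "minimal_finite_space Z" "contractible_space Z"
  obtains a where "topspace Z \<subseteq> {a}"
proof -
  obtain a where "homotopic_with (\<lambda>_. True) Z Z id (\<lambda>_. a)"
    using assms(2) unfolding contractible_space_def by blast
  then have const_id: "homotopic_with (\<lambda>_. True) Z Z (\<lambda>_. a) id"
    by (rule homotopic_with_symD)
  have "a = z" if "z \<in> topspace Z" for z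
    using minimal_finite_space_homotopic_id[OF assms(1) const_id that] by simp
  then show thesis using that by blast
qed

lemma abs_det_assoc_matrix_homotopy_equivalent:
  fixes X :: "'a topology" and Y :: "'b topology"
  assumes "X homotopy_equivalent_space Y" "finite_T0_space X" "finite_T0_space Y"
    and f: "labelling X f" and g: "labelling Y g"
  shows "\<bar>det (assoc_matrix X f)\<bar> = \<bar>det (assoc_matrix Y g)\<bar>"
proof -
  obtain ZX :: "'a topology" and hX
    where ZX: "minimal_finite_space ZX" "X homotopy_equivalent_space ZX" "labelling ZX hX"
    and det_X: "\<bar>det (assoc_matrix X f)\<bar> = \<bar>det (assoc_matrix ZX hX)\<bar>"
    using finite_T0_space_core[OF assms(2)] f by blast
  obtain ZY :: "'b topology" and hY
    where ZY: "minimal_finite_space ZY" "Y homotopy_equivalent_space ZY" "labelling ZY hY"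
    and det_Y: "\<bar>det (assoc_matrix Y g)\<bar> = \<bar>det (assoc_matrix ZY hY)\<bar>"
    using finite_T0_space_core[OF assms(3)] g by blast
  have "ZX homotopy_equivalent_space X"
    using ZX(2) homotopy_equivalent_space_sym by blast
  then have "ZX homotopy_equivalent_space ZY"
    using homotopy_eqv_trans[OF _ homotopy_eqv_trans[OF assms(1) ZY(2)]] by blast
  then have "det (assoc_matrix ZX hX) = det (assoc_matrix ZY hY)"
    by (intro det_assoc_matrix_homeomorphic[OF _ ZX(3) ZY(3)]
        homotopy_equivalent_minimal_finite_spaces_homeomorphic[OF ZX(1) ZY(1)])
  then show ?thesis using det_X det_Y by simp
qed

lemma det_assoc_matrix_contractible:
  fixes X :: "'a topology"
  assumes "contractible_space X" "topspace X \<noteq> {}" "finite_T0_space X" and f: "labelling X f"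
  shows "det (assoc_matrix X f) = 0"
proof -
  obtain Z :: "'a topology" and h
    where Z: "minimal_finite_space Z" "X homotopy_equivalent_space Z" "labelling Z h"
    and det_X: "\<bar>det (assoc_matrix X f)\<bar> = \<bar>det (assoc_matrix Z h)\<bar>"
    using finite_T0_space_core[OF assms(3)] f by blast
  have "contractible_space Z"
    using assms(1) homotopy_equivalent_space_contractibility[OF Z(2)] by blast
  then obtain a where a: "topspace Z \<subseteq> {a}"
    using contractible_minimal_finite_space_subsingleton[OF Z(1)] by blast
  obtain \<phi> where "continuous_map X Z \<phi>"
    using Z(2) unfolding homotopy_equivalent_space_def by blast
  then have "topspace Z \<noteq> {}"
    using continuous_map_image_subset_topspace assms(2) by blast
  then have "topspace Z = {a}" using a by blast
  then show ?thesis using det_X det_assoc_matrix_singleton[of Z a h] by simp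
qed

theorem mainTheorem4:
  fixes X :: "'a topology" and Y :: "'b topology"
    and f :: "nat \<Rightarrow> 'a" and g :: "nat \<Rightarrow> 'b"
  assumes "finite_T0_space X" and "finite_T0_space Y"
    and "labelling X f" and "labelling Y g"
  shows "(minimal_finite_space X \<and> minimal_finite_space Y \<and> X homotopy_equivalent_space Y
            \<longrightarrow> Determinant.det (assoc_matrix X f) = Determinant.det (assoc_matrix Y g))
       \<and> (X homotopy_equivalent_space Y
            \<longrightarrow> \<bar>Determinant.det (assoc_matrix X f)\<bar> = \<bar>Determinant.det (assoc_matrix Y g)\<bar>)
       \<and> (contractible_space X \<and> topspace X \<noteq> {}
            \<longrightarrow> Determinant.det (assoc_matrix X f) = 0)"
  using det_assoc_matrix_homeomorphic[OF homotopy_equivalent_minimal_finite_spaces_homeomorphic assms(3,4)]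
    abs_det_assoc_matrix_homotopy_equivalent[OF _ assms]
    det_assoc_matrix_contractible[OF _ _ assms(1,3)]
  by blast

end
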